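(* Let $u_0,\theta_0,\psi_0\in\mathbb R$ satisfy $a_ju_0+1>0$ for $j=1,\ldots,m$, and suppose $A:=Q(u_0)^{1/2}\sin\theta_0\in(0,1)$. Then there exist unique solutions $u(t),\theta(t),\psi(t)$, defined for all $t\in\mathbb R$, of \[\frac{du}{dt}=2Q(u)^{1/2}\cos\theta,\] \[\frac{d\theta}{dt}=-Q(u)^{1/2}\sin\theta\sum_{j=1}^m\frac{a_j}{a_ju+1},\] \[\frac{d\psi}{dt}=-Q(u)^{1/2}\sin\theta\sum_{j=1}^m\frac{a_j^2}{a_ju+1},\] with $u(0)=u_0$, $\theta(0)=\theta_0$ and $\psi(0)=\psi_0$. Moreover, $u$ and $\theta$ are nonconstant and periodic with some period $T>0$, and there exists $\Psi>0$ with $\psi(t+T)=\psi(t)-\Psi$ for all $t\in\mathbb R$.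
   Context: Standing assumptions: $m\ge3$, and $a_1\le\cdots\le a_m$ are integers, not all zero, with highest common factor $1$ and $a_1+\cdots+a_m=0$. $Q(u)=\prod_{j=1}^m(a_ju+1)$. *)

theory Defs
  imports Complex_Main
begin

definition Qpoly :: "(nat \<Rightarrow> int) \<Rightarrow> nat \<Rightarrow> real \<Rightarrow> real" where
  "Qpoly a m u = (\<Prod>j=1..m. of_int (a j) * u + 1)"

definition is_solution ::
  "(nat \<Rightarrow> int) \<Rightarrow> nat \<Rightarrow> (real \<Rightarrow> real) \<Rightarrow> (real \<Rightarrow> real) \<Rightarrow> (real \<Rightarrow> real) \<Rightarrow> bool" where
  "is_solution a m u \<theta> \<psi> \<longleftrightarrow>
     (\<forall>t. \<forall>j\<in>{1..m}. of_int (a j) * u t + 1 > 0) \<and>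
     (\<forall>t. (u has_real_derivative 2 * sqrt (Qpoly a m (u t)) * cos (\<theta> t)) (at t)) \<and>
     (\<forall>t. (\<theta> has_real_derivative
            - sqrt (Qpoly a m (u t)) * sin (\<theta> t) *
              (\<Sum>j=1..m. of_int (a j) / (of_int (a j) * u t + 1))) (at t)) \<and>
     (\<forall>t. (\<psi> has_real_derivative
            - sqrt (Qpoly a m (u t)) * sin (\<theta> t) *
              (\<Sum>j=1..m. (of_int (a j))^2 / (of_int (a j) * u t + 1))) (at t))"

end

(* Write X = sqrt (Q u) * cos theta. Then A = sqrt (Q u) * sin theta is conserved, and the
   system for (u, theta) becomes u' = 2 X, X' = Q'(u) on the curve Q u = A^2 + X^2.
   Because the weights sum to zero, Q'/Q = - u R(u) with R > 0, so Q increases up to u = 0 and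
   decreases afterwards; as Q 0 = 1 > A^2, the level Q = A^2 is crossed exactly once at some
   u1 < 0 and once at some u2 > 0, and Q - A^2 = (u - u1) (u2 - u) g(u) with g > 0 on [u1, u2].
   The substitution u = c + r cos phi turns the motion into the scalar equation
   phi' = 2 sqrt (g u), whose solution gains 2 pi in a finite time T, the period.
   theta is recovered as the polar angle of (X, A), and psi' = - A R(u) < 0 gives the drift.
   Uniqueness is a Gronwall argument: the right-hand side is locally Lipschitz in (u, theta). *)

theory Submission
  imports Defs "HOL-Analysis.Analysis" "HOL-Computational_Algebra.Polynomial"
begin

section \<open>Flows of periodic scalar equations\<close>

lemma continuous_has_antiderivative:
  fixes f :: "real \<Rightarrow> real"
  assumes "continuous_on UNIV f"
  shows "\<exists>G. G c = 0 \<and> (\<forall>x. (G has_real_derivative f x) (at x))"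
proof -
  obtain F where "\<And>x::real. (F has_vector_derivative f x) (at x)"
    using einterval_antiderivative[of "-\<infinity>" "\<infinity>" f] assms
    by (auto simp: continuous_on_eq_continuous_at)
  then have "((\<lambda>x. F x - F c) has_real_derivative f x) (at x)" for x
    by (auto intro!: derivative_eq_intros simp: has_real_derivative_iff_has_vector_derivative)
  then show ?thesis by (intro exI[of _ "\<lambda>x. F x - F c"]) simp
qed

lemma shift_difference_const:
  fixes f f' :: "real \<Rightarrow> real"
  assumes "\<And>x. (f has_real_derivative f' x) (at x)" and "\<And>x. f' (x + p) = f' x"
  shows "f (x + p) = f x + (f p - f 0)"
proof -
  have "((\<lambda>x. f (x + p)) has_real_derivative f' (x + p) * 1) (at x)" for x
    by (rule DERIV_chain2[OF assms(1)]) (auto intro!: derivative_eq_intros)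
  then have "((\<lambda>x. f (x + p) - f x) has_real_derivative 0) (at x)" for x
    using DERIV_diff[OF _ assms(1)] assms(2) by fastforce
  from DERIV_isconst_all[of "\<lambda>x. f (x + p) - f x" x 0] this show ?thesis by simp
qed

lemma surj_of_shift_increment:
  fixes F :: "real \<Rightarrow> real"
  assumes cont: "continuous_on UNIV F" and shift: "\<And>x. F (x + p) = F x + T"
    and "p \<ge> 0" and "T > 0"
  shows "surj F"
proof -
  have shift_nat: "F (x + real n * p) = F x + real n * T" for x n
  proof (induction n)
    case (Suc n)
    have "F (x + real (Suc n) * p) = F ((x + real n * p) + p)" by (simp add: algebra_simps)
    also have "\<dots> = F x + real n * T + T" by (simp only: shift Suc)
    finally show ?case by (simp add: algebra_simps)
  qed simp
  have "y \<in> range F" for y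
  proof -
    obtain n where n: "\<bar>y - F 0\<bar> < real n * T" using reals_Archimedean3[OF \<open>T > 0\<close>] by blast
    have "F (- real n * p) = F 0 - real n * T"
      using shift_nat[of "- real n * p" n] by simp
    moreover have "F (real n * p) = F 0 + real n * T" using shift_nat[of 0 n] by simp
    moreover have "- real n * p \<le> real n * p" using \<open>p \<ge> 0\<close> by simp
    ultimately obtain x where "F x = y"
      using IVT'[of F "- real n * p" y "real n * p"] n cont continuous_on_subset by fastforce
    then show ?thesis by blast
  qed
  then show ?thesis by blast
qed

lemma periodic_phase_flow:
  fixes h :: "real \<Rightarrow> real" and p \<phi>0 :: real
  assumes cont: "continuous_on UNIV h" and pos: "\<And>x. h x > 0"
    and per: "\<And>x. h (x + p) = h x" and "p > 0"
  obtains \<phi> T where "T > 0" "\<phi> 0 = \<phi>0" "\<And>t. (\<phi> has_real_derivative h (\<phi> t)) (at t)"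
    "\<And>t. \<phi> (t + T) = \<phi> t + p" "surj \<phi>"
proof -
  \<comment> \<open>The flow is the inverse of a primitive F of 1/h; by periodicity F (x + p) - F x is a
    constant T > 0, which is the period.\<close>
  have h_nonzero: "h x \<noteq> 0" for x using pos[of x] by simp
  have cont_inv: "continuous_on UNIV (\<lambda>x. 1 / h x)"
    using cont h_nonzero by (intro continuous_intros) auto
  obtain F where F0: "F \<phi>0 = 0" and dF: "\<And>x. (F has_real_derivative 1 / h x) (at x)"
    using continuous_has_antiderivative[OF cont_inv, of \<phi>0] by auto
  have mono: "strict_mono F"
    unfolding strict_mono_def
  proof (intro allI impI)
    show "F x < F y" if "x < y" for x y
      by (rule DERIV_pos_imp_increasing[OF that]) (use dF pos in \<open>auto intro!: exI\<close>)
  qed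
  define T where "T = F p - F 0"
  have shift: "F (x + p) = F x + T" for x
    unfolding T_def by (rule shift_difference_const[OF dF]) (simp add: per)
  have "T > 0" using mono \<open>p > 0\<close> by (simp add: T_def strict_mono_less)
  have contF: "continuous_on UNIV F"
    using dF by (blast intro: continuous_at_imp_continuous_on DERIV_isCont)
  have "surj F" by (rule surj_of_shift_increment[OF contF shift]) (use \<open>p > 0\<close> \<open>T > 0\<close> in auto)
  have "inj F" using mono by (simp add: strict_mono_eq inj_on_def)
  define \<phi> where "\<phi> = inv F"
  have \<phi>_F: "\<phi> (F x) = x" for x unfolding \<phi>_def by (rule inv_f_f[OF \<open>inj F\<close>])
  have F_\<phi>: "F (\<phi> t) = t" for t unfolding \<phi>_def by (rule surj_f_inv_f[OF \<open>surj F\<close>])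
  have "\<phi> 0 = \<phi>0" using \<phi>_F[of \<phi>0] F0 by simp
  moreover have "\<phi> (t + T) = \<phi> t + p" for t
    using \<phi>_F[of "\<phi> t + p"] by (simp add: shift F_\<phi>)
  moreover have "(\<phi> has_real_derivative h (\<phi> t)) (at t)" for t
  proof -
    have "isCont \<phi> (F (\<phi> t))"
      by (rule isCont_inverse_function[where d=1]) (auto simp: \<phi>_F intro: DERIV_isCont[OF dF])
    then have "isCont \<phi> t" by (simp add: F_\<phi>)
    then have "(\<phi> has_real_derivative inverse (1 / h (\<phi> t))) (at t)"
      by (intro DERIV_inverse_function[where a="t - 1" and b="t + 1" and f=F] dF)
         (auto simp: F_\<phi> h_nonzero)
    then show ?thesis by simp
  qed
  moreover have "surj \<phi>" using \<phi>_F by (metis surjI)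
  ultimately show ?thesis using that \<open>T > 0\<close> by blast
qed

section \<open>Gronwall and Lipschitz estimates\<close>

lemma gronwall_vanishing:
  fixes z z' :: "real \<Rightarrow> real"
  assumes deriv: "\<And>s. (z has_real_derivative z' s) (at s)"
    and bound: "\<And>s. s \<in> closed_segment 0 t \<Longrightarrow> \<bar>z' s\<bar> \<le> C * z s"
    and "z 0 = 0"
  shows "z t \<le> 0"
proof (cases "0 \<le> t")
  case True
  define w where "w s = z s * exp (- C * s)" for s
  have "w t \<le> w 0"
  proof (rule DERIV_nonpos_imp_nonincreasing[of 0 t w, OF True])
    fix s assume s: "0 \<le> s" "s \<le> t"
    have "(w has_real_derivative (z' s - C * z s) * exp (- C * s)) (at s)"
      unfolding w_def by (auto intro!: derivative_eq_intros deriv simp: algebra_simps)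
    moreover have "z' s - C * z s \<le> 0"
      using bound[of s] s True by (auto simp: closed_segment_eq_real_ivl)
    ultimately show "\<exists>y. (w has_real_derivative y) (at s) \<and> y \<le> 0"
      by (auto intro!: mult_nonpos_nonneg)
  qed
  then show ?thesis using \<open>z 0 = 0\<close> by (simp add: w_def mult_le_0_iff)
next
  case False
  define w where "w s = z s * exp (C * s)" for s
  have "w t \<le> w 0"
  proof (rule DERIV_nonneg_imp_nondecreasing[of t 0 w])
    show "t \<le> 0" using False by simp
    fix s assume s: "t \<le> s" "s \<le> 0"
    have "(w has_real_derivative (z' s + C * z s) * exp (C * s)) (at s)"
      unfolding w_def by (auto intro!: derivative_eq_intros deriv simp: algebra_simps)
    moreover have "z' s + C * z s \<ge> 0"
      using bound[of s] s False by (auto simp: closed_segment_eq_real_ivl)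
    ultimately show "\<exists>y. (w has_real_derivative y) (at s) \<and> y \<ge> 0"
      by auto
  qed
  then show ?thesis using \<open>z 0 = 0\<close> by (simp add: w_def mult_le_0_iff)
qed

lemma gronwall_pair_vanishing:
  fixes d e d' e' :: "real \<Rightarrow> real"
  assumes dd: "\<And>s. (d has_real_derivative d' s) (at s)"
    and de: "\<And>s. (e has_real_derivative e' s) (at s)"
    and "L \<ge> 0"
    and bound_d: "\<And>s. s \<in> closed_segment 0 t \<Longrightarrow> \<bar>d' s\<bar> \<le> L * (\<bar>d s\<bar> + \<bar>e s\<bar>)"
    and bound_e: "\<And>s. s \<in> closed_segment 0 t \<Longrightarrow> \<bar>e' s\<bar> \<le> L * (\<bar>d s\<bar> + \<bar>e s\<bar>)"
    and "d 0 = 0" "e 0 = 0"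
  shows "d t = 0 \<and> e t = 0"
proof -
  define z where "z s = (d s)\<^sup>2 + (e s)\<^sup>2" for s
  have "z t \<le> 0"
  proof (rule gronwall_vanishing[of z "\<lambda>s. 2 * d s * d' s + 2 * e s * e' s"])
    show "(z has_real_derivative 2 * d s * d' s + 2 * e s * e' s) (at s)" for s
      unfolding z_def by (auto intro!: derivative_eq_intros dd de)
    fix s assume s: "s \<in> closed_segment 0 t"
    have "\<bar>2 * d s * d' s + 2 * e s * e' s\<bar> \<le> 2 * \<bar>d s\<bar> * \<bar>d' s\<bar> + 2 * \<bar>e s\<bar> * \<bar>e' s\<bar>"
      using abs_triangle_ineq[of "2 * d s * d' s" "2 * e s * e' s"] by (simp add: abs_mult)
    also have "\<dots> \<le> 2 * \<bar>d s\<bar> * (L * (\<bar>d s\<bar> + \<bar>e s\<bar>)) + 2 * \<bar>e s\<bar> * (L * (\<bar>d s\<bar> + \<bar>e s\<bar>))"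
      using bound_d[OF s] bound_e[OF s] by (intro add_mono mult_left_mono) auto
    also have "\<dots> = 2 * L * (\<bar>d s\<bar> + \<bar>e s\<bar>)\<^sup>2" by (simp add: algebra_simps power2_eq_square)
    also have "\<dots> \<le> 2 * L * (2 * ((d s)\<^sup>2 + (e s)\<^sup>2))"
      using \<open>L \<ge> 0\<close> sum_squares_ge_zero[of "\<bar>d s\<bar> - \<bar>e s\<bar>" 0]
      by (intro mult_left_mono) (auto simp: power2_eq_square algebra_simps)
    finally show "\<bar>2 * d s * d' s + 2 * e s * e' s\<bar> \<le> 4 * L * z s"
      by (simp add: z_def algebra_simps)
  qed (simp add: z_def \<open>d 0 = 0\<close> \<open>e 0 = 0\<close>)
  then show ?thesis by (simp add: z_def sum_power2_le_zero_iff)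
qed

lemma abs_sin_diff_le: "\<bar>sin x - sin y\<bar> \<le> \<bar>x - y\<bar>" for x y :: real
proof -
  have "\<bar>sin x - sin y\<bar> = 2 * \<bar>sin ((x - y) / 2)\<bar> * \<bar>cos ((x + y) / 2)\<bar>"
    by (simp add: sin_diff_sin abs_mult)
  also have "\<dots> \<le> 2 * \<bar>(x - y) / 2\<bar> * 1"
    by (intro mult_mono abs_sin_x_le_abs_x) auto
  finally show ?thesis by simp
qed

lemma abs_cos_diff_le: "\<bar>cos x - cos y\<bar> \<le> \<bar>x - y\<bar>" for x y :: real
proof -
  have "\<bar>cos x - cos y\<bar> = 2 * \<bar>sin ((x + y) / 2)\<bar> * \<bar>sin ((y - x) / 2)\<bar>"
    by (simp add: cos_diff_cos abs_mult)
  also have "\<dots> \<le> 2 * 1 * \<bar>(y - x) / 2\<bar>"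
    by (intro mult_mono abs_sin_x_le_abs_x) auto
  finally show ?thesis by simp
qed

lemma C1_times_contraction_lipschitz:
  fixes f f' h :: "real \<Rightarrow> real"
  assumes deriv: "\<And>x. x \<in> {p..q} \<Longrightarrow> (f has_real_derivative f' x) (at x)"
    and cont: "continuous_on {p..q} f'"
    and h_bound: "\<And>s. \<bar>h s\<bar> \<le> 1" and h_lip: "\<And>s s'. \<bar>h s - h s'\<bar> \<le> \<bar>s - s'\<bar>"
  shows "\<exists>C\<ge>0. \<forall>x\<in>{p..q}. \<forall>y\<in>{p..q}. \<forall>s s'.
           \<bar>f x * h s - f y * h s'\<bar> \<le> C * (\<bar>x - y\<bar> + \<bar>s - s'\<bar>)"
proof -
  obtain B where B: "\<forall>x\<in>{p..q}. \<bar>f' x\<bar> \<le> B"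
    using compact_imp_bounded[OF compact_continuous_image[OF cont compact_Icc]]
    by (auto simp: bounded_real)
  have "continuous_on {p..q} f"
    using deriv by (intro continuous_at_imp_continuous_on ballI DERIV_isCont) auto
  then obtain M where M: "\<forall>x\<in>{p..q}. \<bar>f x\<bar> \<le> M"
    using compact_imp_bounded[OF compact_continuous_image[OF _ compact_Icc]]
    by (metis bounded_real imageI)
  have lip: "\<bar>f x - f y\<bar> \<le> B * \<bar>x - y\<bar>" if "x \<in> {p..q}" "y \<in> {p..q}" for x y
    using field_differentiable_bound[of "{p..q}" f f' B x y] that B deriv
    by (auto intro: has_field_derivative_at_within)
  show ?thesis
  proof (intro exI[of _ "\<bar>B\<bar> + \<bar>M\<bar>"] conjI ballI allI)
    fix x y s s' assume xy: "x \<in> {p..q}" "y \<in> {p..q}"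
    have "\<bar>f x * h s - f y * h s'\<bar> = \<bar>(f x - f y) * h s + f y * (h s - h s')\<bar>"
      by (simp add: algebra_simps)
    also have "\<dots> \<le> \<bar>f x - f y\<bar> * \<bar>h s\<bar> + \<bar>f y\<bar> * \<bar>h s - h s'\<bar>"
      by (metis abs_mult abs_triangle_ineq)
    also have "\<dots> \<le> \<bar>B\<bar> * \<bar>x - y\<bar> * 1 + \<bar>M\<bar> * \<bar>s - s'\<bar>"
    proof (rule add_mono)
      have "\<bar>f x - f y\<bar> \<le> \<bar>B\<bar> * \<bar>x - y\<bar>"
        using lip[OF xy] mult_right_mono[OF abs_ge_self abs_ge_zero, of B "x - y"] by linarith
      then show "\<bar>f x - f y\<bar> * \<bar>h s\<bar> \<le> \<bar>B\<bar> * \<bar>x - y\<bar> * 1"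
        by (rule mult_mono[OF _ h_bound]) simp_all
      have "\<bar>f y\<bar> \<le> \<bar>M\<bar>" using M xy(2) abs_ge_self[of M] by force
      then show "\<bar>f y\<bar> * \<bar>h s - h s'\<bar> \<le> \<bar>M\<bar> * \<bar>s - s'\<bar>"
        by (rule mult_mono[OF _ h_lip]) simp_all
    qed
    also have "\<dots> \<le> (\<bar>B\<bar> + \<bar>M\<bar>) * (\<bar>x - y\<bar> + \<bar>s - s'\<bar>)"
      using abs_ge_zero[of "B * (s - s')"] abs_ge_zero[of "M * (x - y)"]
      by (simp add: algebra_simps abs_mult)
    finally show "\<bar>f x * h s - f y * h s'\<bar> \<le> (\<bar>B\<bar> + \<bar>M\<bar>) * (\<bar>x - y\<bar> + \<bar>s - s'\<bar>)" .
  qed simp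
qed

section \<open>The polynomial Q on the phase domain\<close>

definition in_phase_domain :: "(nat \<Rightarrow> int) \<Rightarrow> nat \<Rightarrow> real \<Rightarrow> bool" where
  "in_phase_domain a m u \<longleftrightarrow> (\<forall>j\<in>{1..m}. of_int (a j) * u + 1 > 0)"

definition Ssum :: "(nat \<Rightarrow> int) \<Rightarrow> nat \<Rightarrow> real \<Rightarrow> real" where
  "Ssum a m u = (\<Sum>j=1..m. of_int (a j) / (of_int (a j) * u + 1))"

definition Rsum :: "(nat \<Rightarrow> int) \<Rightarrow> nat \<Rightarrow> real \<Rightarrow> real" where
  "Rsum a m u = (\<Sum>j=1..m. (of_int (a j))\<^sup>2 / (of_int (a j) * u + 1))"

lemma in_phase_domain_0: "in_phase_domain a m 0"
  by (simp add: in_phase_domain_def)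

lemma in_phase_domain_between:
  assumes "in_phase_domain a m x" "in_phase_domain a m y" "x \<le> z" "z \<le> y"
  shows "in_phase_domain a m z"
  unfolding in_phase_domain_def
proof
  fix j assume j: "j \<in> {1..m}"
  have "of_int (a j) * x + 1 > (0::real)" "of_int (a j) * y + 1 > (0::real)"
    using assms j by (auto simp: in_phase_domain_def)
  moreover have "of_int (a j) * z \<ge> min (of_int (a j) * x) (of_int (a j) * (y::real))"
    using assms(3,4) by (cases "a j \<ge> 0") (auto simp: mult_left_mono mult_left_mono_neg)
  ultimately show "of_int (a j) * z + 1 > 0" by linarith
qed

lemma Qpoly_0 [simp]: "Qpoly a m 0 = 1"
  by (simp add: Qpoly_def)

lemma Qpoly_pos: "in_phase_domain a m u \<Longrightarrow> Qpoly a m u > 0"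
  unfolding in_phase_domain_def Qpoly_def by (rule prod_pos) auto

lemma continuous_on_Qpoly: "continuous_on S (Qpoly a m)"
  unfolding Qpoly_def by (intro continuous_intros)

lemma continuous_on_Ssum: "(\<And>x. x \<in> S \<Longrightarrow> in_phase_domain a m x) \<Longrightarrow> continuous_on S (Ssum a m)"
  unfolding Ssum_def in_phase_domain_def by (intro continuous_intros) (fastforce dest!: bspec)

lemma continuous_on_Rsum: "(\<And>x. x \<in> S \<Longrightarrow> in_phase_domain a m x) \<Longrightarrow> continuous_on S (Rsum a m)"
  unfolding Rsum_def in_phase_domain_def by (intro continuous_intros) (fastforce dest!: bspec)

lemma Qpoly_deriv:
  assumes "in_phase_domain a m u"
  shows "(Qpoly a m has_real_derivative Qpoly a m u * Ssum a m u) (at u)"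
proof -
  have "((\<lambda>u. \<Prod>j\<in>{1..m}. of_int (a j) * u + 1) has_real_derivative
         (\<Prod>j\<in>{1..m}. of_int (a j) * u + 1) * (\<Sum>j\<in>{1..m}. of_int (a j) / (of_int (a j) * u + 1))) (at u)"
    using assms unfolding in_phase_domain_def
    by (intro has_field_derivative_prod'[where f="\<lambda>j u. of_int (a j) * u + 1", simplified])
       (auto intro!: derivative_eq_intros dest!: bspec)
  then show ?thesis unfolding Qpoly_def Ssum_def by (simp add: fun_eq_iff)
qed

lemma sqrt_Qpoly_deriv:
  assumes "in_phase_domain a m u"
  shows "((\<lambda>x. sqrt (Qpoly a m x)) has_real_derivative sqrt (Qpoly a m u) * Ssum a m u / 2) (at u)"
proof -
  have Q: "Qpoly a m u > 0" by (rule Qpoly_pos[OF assms])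
  have "inverse r / 2 * (r * r * s) = r * s / 2" if "r > 0" for r s :: real
    using that by (simp add: field_simps)
  from this[of "sqrt (Qpoly a m u)" "Ssum a m u"]
  have e: "inverse (sqrt (Qpoly a m u)) / 2 * (Qpoly a m u * Ssum a m u) =
      sqrt (Qpoly a m u) * Ssum a m u / 2"
    using Q by simp
  show ?thesis
    using DERIV_chain2[OF DERIV_real_sqrt[OF Q] Qpoly_deriv[OF assms]] by (simp only: e)
qed

lemma Ssum_deriv:
  assumes "in_phase_domain a m u"
  shows "(Ssum a m has_real_derivative - (\<Sum>j=1..m. (of_int (a j))\<^sup>2 / (of_int (a j) * u + 1)\<^sup>2)) (at u)"
  using assms unfolding Ssum_def in_phase_domain_def sum_negf[symmetric]
  by (intro DERIV_sum) (auto intro!: derivative_eq_intros dest!: bspec simp: power2_eq_square field_simps)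

lemma Rsum_pos:
  assumes "\<exists>j\<in>{1..m}. a j \<noteq> 0" and "in_phase_domain a m u"
  shows "Rsum a m u > 0"
proof -
  obtain j where j: "j \<in> {1..m}" "a j \<noteq> 0" using assms(1) by blast
  show ?thesis unfolding Rsum_def
    by (rule sum_pos2[OF _ j(1)]) (use j assms(2) in \<open>auto simp: in_phase_domain_def less_imp_le\<close>)
qed

lemma Ssum_eq_neg_mult_Rsum:
  assumes "(\<Sum>j=1..m. a j) = 0" and "in_phase_domain a m u"
  shows "Ssum a m u = - u * Rsum a m u"
proof -
  have "Ssum a m u = (\<Sum>j=1..m. of_int (a j) - u * ((of_int (a j))\<^sup>2 / (of_int (a j) * u + 1)))"
    unfolding Ssum_def
  proof (rule sum.cong[OF refl])
    fix j assume "j \<in> {1..m}"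
    then have "of_int (a j) * u + 1 > (0::real)" using assms(2) by (simp add: in_phase_domain_def)
    then show "of_int (a j) / (of_int (a j) * u + 1) =
        of_int (a j) - u * ((of_int (a j))\<^sup>2 / (of_int (a j) * u + 1))"
      by (simp add: field_simps power2_eq_square)
  qed
  also have "\<dots> = (\<Sum>j=1..m. (of_int (a j)::real)) - u * Rsum a m u"
    by (simp add: sum_subtractf sum_distrib_left Rsum_def)
  also have "(\<Sum>j=1..m. (of_int (a j)::real)) = 0"
    using assms(1) by (metis of_int_0 of_int_sum)
  finally show ?thesis by simp
qed

section \<open>Uniqueness\<close>

lemma is_solutionD:
  assumes "is_solution a m u \<theta> \<psi>"
  shows "in_phase_domain a m (u t)"
    and "(u has_real_derivative 2 * sqrt (Qpoly a m (u t)) * cos (\<theta> t)) (at t)"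
    and "(\<theta> has_real_derivative - sqrt (Qpoly a m (u t)) * sin (\<theta> t) * Ssum a m (u t)) (at t)"
    and "(\<psi> has_real_derivative - sqrt (Qpoly a m (u t)) * sin (\<theta> t) * Rsum a m (u t)) (at t)"
  using assms unfolding is_solution_def in_phase_domain_def Ssum_def Rsum_def by auto

lemma is_solutionI:
  assumes "\<And>t. in_phase_domain a m (u t)"
    and "\<And>t. (u has_real_derivative 2 * sqrt (Qpoly a m (u t)) * cos (\<theta> t)) (at t)"
    and "\<And>t. (\<theta> has_real_derivative - sqrt (Qpoly a m (u t)) * sin (\<theta> t) * Ssum a m (u t)) (at t)"
    and "\<And>t. (\<psi> has_real_derivative - sqrt (Qpoly a m (u t)) * sin (\<theta> t) * Rsum a m (u t)) (at t)"
  shows "is_solution a m u \<theta> \<psi>"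
  using assms unfolding is_solution_def in_phase_domain_def Ssum_def Rsum_def by auto

lemma u_field_lipschitz:
  assumes dom: "\<And>x. x \<in> {p..q} \<Longrightarrow> in_phase_domain a m x"
  shows "\<exists>C\<ge>0. \<forall>x\<in>{p..q}. \<forall>y\<in>{p..q}. \<forall>\<theta> \<eta>.
    \<bar>2 * sqrt (Qpoly a m x) * cos \<theta> - 2 * sqrt (Qpoly a m y) * cos \<eta>\<bar> \<le> C * (\<bar>x - y\<bar> + \<bar>\<theta> - \<eta>\<bar>)"
proof (rule C1_times_contraction_lipschitz[where f="\<lambda>x. 2 * sqrt (Qpoly a m x)" and h=cos])
  show "((\<lambda>x. 2 * sqrt (Qpoly a m x)) has_real_derivative
      2 * (sqrt (Qpoly a m x) * Ssum a m x / 2)) (at x)" if "x \<in> {p..q}" for x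
    using sqrt_Qpoly_deriv[OF dom[OF that]] by (rule DERIV_cmult)
  show "continuous_on {p..q} (\<lambda>x. 2 * (sqrt (Qpoly a m x) * Ssum a m x / 2))"
    by (intro continuous_intros continuous_on_Ssum[OF dom] continuous_on_Qpoly) auto
qed (auto simp: abs_cos_diff_le)

lemma theta_field_lipschitz:
  assumes dom: "\<And>x. x \<in> {p..q} \<Longrightarrow> in_phase_domain a m x"
  shows "\<exists>C\<ge>0. \<forall>x\<in>{p..q}. \<forall>y\<in>{p..q}. \<forall>\<theta> \<eta>.
    \<bar>- sqrt (Qpoly a m x) * sin \<theta> * Ssum a m x - - sqrt (Qpoly a m y) * sin \<eta> * Ssum a m y\<bar>
      \<le> C * (\<bar>x - y\<bar> + \<bar>\<theta> - \<eta>\<bar>)"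
proof -
  have "\<exists>C\<ge>0. \<forall>x\<in>{p..q}. \<forall>y\<in>{p..q}. \<forall>\<theta> \<eta>.
    \<bar>sqrt (Qpoly a m x) * Ssum a m x * sin \<theta> - sqrt (Qpoly a m y) * Ssum a m y * sin \<eta>\<bar>
      \<le> C * (\<bar>x - y\<bar> + \<bar>\<theta> - \<eta>\<bar>)"
  proof (rule C1_times_contraction_lipschitz[where f="\<lambda>x. sqrt (Qpoly a m x) * Ssum a m x" and h=sin])
    show "((\<lambda>x. sqrt (Qpoly a m x) * Ssum a m x) has_real_derivative
        sqrt (Qpoly a m x) * Ssum a m x / 2 * Ssum a m x +
        - (\<Sum>j=1..m. (of_int (a j))\<^sup>2 / (of_int (a j) * x + 1)\<^sup>2) * sqrt (Qpoly a m x)) (at x)"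
      if "x \<in> {p..q}" for x
      using sqrt_Qpoly_deriv[OF dom[OF that]] Ssum_deriv[OF dom[OF that]] by (rule DERIV_mult)
    show "continuous_on {p..q} (\<lambda>x. sqrt (Qpoly a m x) * Ssum a m x / 2 * Ssum a m x +
        - (\<Sum>j=1..m. (of_int (a j))\<^sup>2 / (of_int (a j) * x + 1)\<^sup>2) * sqrt (Qpoly a m x))"
    proof (intro continuous_intros continuous_on_Ssum[OF dom] continuous_on_Qpoly ballI)
      fix x j assume "x \<in> {p..q}" "j \<in> {1..m}"
      then have "of_int (a j) * x + 1 > (0::real)" using dom by (simp add: in_phase_domain_def)
      then show "(of_int (a j) * x + 1)\<^sup>2 \<noteq> (0::real)" by simp
    qed simp_all
  qed (auto simp: abs_sin_diff_le)
  then show ?thesis by (simp add: abs_minus_commute algebra_simps)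
qed

lemma trajectories_in_domain_interval:
  assumes "continuous_on I u" "continuous_on I v" "compact I" "I \<noteq> {}"
    and "\<And>s. s \<in> I \<Longrightarrow> in_phase_domain a m (u s)" "\<And>s. s \<in> I \<Longrightarrow> in_phase_domain a m (v s)"
  obtains p q where "\<And>s. s \<in> I \<Longrightarrow> u s \<in> {p..q} \<and> v s \<in> {p..q}"
    "\<And>x. x \<in> {p..q} \<Longrightarrow> in_phase_domain a m x"
proof -
  define K where "K = u ` I \<union> v ` I"
  have "compact K" "K \<noteq> {}"
    using assms(1-4) by (auto simp: K_def intro!: compact_Un compact_continuous_image)
  then obtain p q where "p \<in> K" "q \<in> K" and K_bounds: "\<And>y. y \<in> K \<Longrightarrow> p \<le> y \<and> y \<le> q"
    using compact_attains_inf[of K] compact_attains_sup[of K] by metis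
  moreover have "\<And>y. y \<in> K \<Longrightarrow> in_phase_domain a m y" using assms(5,6) by (auto simp: K_def)
  ultimately have "\<And>x. x \<in> {p..q} \<Longrightarrow> in_phase_domain a m x"
    by (auto intro: in_phase_domain_between)
  with K_bounds show ?thesis by (intro that[of p q]) (auto simp: K_def)
qed

lemma solution_unique_u_theta:
  assumes sol_u: "is_solution a m u \<theta> \<psi>" and sol_v: "is_solution a m v \<eta> \<zeta>"
    and "u 0 = v 0" and "\<theta> 0 = \<eta> 0"
  shows "u t = v t \<and> \<theta> t = \<eta> t"
proof -
  have "continuous_on (closed_segment 0 t) u" "continuous_on (closed_segment 0 t) v"
    using is_solutionD(2)[OF sol_u] is_solutionD(2)[OF sol_v]
    by (blast intro: continuous_at_imp_continuous_on DERIV_isCont)+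
  then obtain p q where in_pq: "\<And>s. s \<in> closed_segment 0 t \<Longrightarrow> u s \<in> {p..q} \<and> v s \<in> {p..q}"
    and dom: "\<And>x. x \<in> {p..q} \<Longrightarrow> in_phase_domain a m x"
    by (rule trajectories_in_domain_interval) (auto intro: is_solutionD(1)[OF sol_u] is_solutionD(1)[OF sol_v])
  obtain C1 where "C1 \<ge> 0" and C1: "\<forall>x\<in>{p..q}. \<forall>y\<in>{p..q}. \<forall>\<theta> \<eta>.
      \<bar>2 * sqrt (Qpoly a m x) * cos \<theta> - 2 * sqrt (Qpoly a m y) * cos \<eta>\<bar> \<le> C1 * (\<bar>x - y\<bar> + \<bar>\<theta> - \<eta>\<bar>)"
    using u_field_lipschitz[OF dom] by blast
  obtain C2 where "C2 \<ge> 0" and C2: "\<forall>x\<in>{p..q}. \<forall>y\<in>{p..q}. \<forall>\<theta> \<eta>.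
      \<bar>- sqrt (Qpoly a m x) * sin \<theta> * Ssum a m x - - sqrt (Qpoly a m y) * sin \<eta> * Ssum a m y\<bar>
        \<le> C2 * (\<bar>x - y\<bar> + \<bar>\<theta> - \<eta>\<bar>)"
    using theta_field_lipschitz[OF dom] by blast
  have "(\<lambda>s. u s - v s) t = 0 \<and> (\<lambda>s. \<theta> s - \<eta> s) t = 0"
  proof (rule gronwall_pair_vanishing[where d = "\<lambda>s. u s - v s" and e = "\<lambda>s. \<theta> s - \<eta> s" and L = "C1 + C2"])
    show "((\<lambda>s. u s - v s) has_real_derivative
        2 * sqrt (Qpoly a m (u s)) * cos (\<theta> s) - 2 * sqrt (Qpoly a m (v s)) * cos (\<eta> s)) (at s)" for s
      by (intro DERIV_diff is_solutionD(2)[OF sol_u] is_solutionD(2)[OF sol_v])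
    show "((\<lambda>s. \<theta> s - \<eta> s) has_real_derivative
        - sqrt (Qpoly a m (u s)) * sin (\<theta> s) * Ssum a m (u s) -
        - sqrt (Qpoly a m (v s)) * sin (\<eta> s) * Ssum a m (v s)) (at s)" for s
      by (intro DERIV_diff is_solutionD(3)[OF sol_u] is_solutionD(3)[OF sol_v])
    fix s assume "s \<in> closed_segment 0 t"
    then have s: "u s \<in> {p..q}" "v s \<in> {p..q}" using in_pq by auto
    have z: "0 \<le> \<bar>u s - v s\<bar> + \<bar>\<theta> s - \<eta> s\<bar>" by simp
    show "\<bar>2 * sqrt (Qpoly a m (u s)) * cos (\<theta> s) - 2 * sqrt (Qpoly a m (v s)) * cos (\<eta> s)\<bar>
        \<le> (C1 + C2) * (\<bar>u s - v s\<bar> + \<bar>\<theta> s - \<eta> s\<bar>)"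
      using C1[rule_format, OF s, of "\<theta> s" "\<eta> s"] mult_nonneg_nonneg[OF \<open>C2 \<ge> 0\<close> z]
      by (simp add: distrib_right)
    show "\<bar>- sqrt (Qpoly a m (u s)) * sin (\<theta> s) * Ssum a m (u s) -
          - sqrt (Qpoly a m (v s)) * sin (\<eta> s) * Ssum a m (v s)\<bar>
        \<le> (C1 + C2) * (\<bar>u s - v s\<bar> + \<bar>\<theta> s - \<eta> s\<bar>)"
      using C2[rule_format, OF s, of "\<theta> s" "\<eta> s"] mult_nonneg_nonneg[OF \<open>C1 \<ge> 0\<close> z]
      by (simp add: distrib_right)
  qed (use \<open>C1 \<ge> 0\<close> \<open>C2 \<ge> 0\<close> \<open>u 0 = v 0\<close> \<open>\<theta> 0 = \<eta> 0\<close> in simp_all)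
  then show ?thesis by simp
qed

lemma solution_unique:
  assumes sol_u: "is_solution a m u \<theta> \<psi>" and sol_v: "is_solution a m v \<eta> \<zeta>"
    and "u 0 = v 0" "\<theta> 0 = \<eta> 0" "\<psi> 0 = \<zeta> 0"
  shows "v = u \<and> \<eta> = \<theta> \<and> \<zeta> = \<psi>"
proof -
  have uv: "v = u" "\<eta> = \<theta>"
    using solution_unique_u_theta[OF sol_u sol_v \<open>u 0 = v 0\<close> \<open>\<theta> 0 = \<eta> 0\<close>] by auto
  have "\<forall>t. ((\<lambda>t. \<psi> t - \<zeta> t) has_real_derivative 0) (at t)"
    using DERIV_diff[OF is_solutionD(4)[OF sol_u] is_solutionD(4)[OF sol_v]] uv by simp
  from DERIV_isconst_all[OF this] have "\<psi> t - \<zeta> t = \<psi> 0 - \<zeta> 0" for t by simp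
  with \<open>\<psi> 0 = \<zeta> 0\<close> uv show ?thesis by (auto simp: fun_eq_iff)
qed

section \<open>Level sets of Q\<close>

lemma poly_two_roots_factor:
  fixes p :: "real poly"
  assumes "poly p u1 = 0" "poly p u2 = 0" "u1 \<noteq> u2"
  obtains w where "\<And>x. poly p x = (x - u1) * (u2 - x) * poly w x"
proof -
  obtain q where q: "p = [:-u1, 1:] * q"
    using assms(1) by (auto simp: poly_eq_0_iff_dvd elim!: dvdE)
  then have "(u2 - u1) * poly q u2 = 0" using assms(2) by auto
  then obtain r where r: "q = [:-u2, 1:] * r"
    using assms(3) by (auto simp: poly_eq_0_iff_dvd elim!: dvdE)
  show ?thesis
    by (rule that[of "- r"]) (simp add: q r algebra_simps)
qed

lemma Qpoly_eq_poly: "Qpoly a m x = poly (\<Prod>j=1..m. [:1, of_int (a j):]) x"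
  by (simp add: Qpoly_def poly_prod add.commute mult.commute)

lemma Qpoly_deriv_factored:
  assumes factor: "\<And>x. Qpoly a m x = c + (x - u1) * (u2 - x) * poly w x"
    and "in_phase_domain a m x"
  shows "Qpoly a m x * Ssum a m x =
    (u1 + u2 - 2 * x) * poly w x + (x - u1) * (u2 - x) * poly (pderiv w) x"
proof -
  have "((\<lambda>x. c + (x - u1) * (u2 - x) * poly w x) has_real_derivative
      (u1 + u2 - 2 * x) * poly w x + (x - u1) * (u2 - x) * poly (pderiv w) x) (at x)"
    by (auto intro!: derivative_eq_intros simp: algebra_simps)
  then have "(Qpoly a m has_real_derivative
      (u1 + u2 - 2 * x) * poly w x + (x - u1) * (u2 - x) * poly (pderiv w) x) (at x)"
    by (simp add: factor[abs_def] fun_eq_iff)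
  with Qpoly_deriv[OF assms(2)] show ?thesis by (rule DERIV_unique)
qed

locale zero_sum_weights =
  fixes a :: "nat \<Rightarrow> int" and m :: nat
  assumes sorted: "\<And>i j. 1 \<le> i \<Longrightarrow> i \<le> j \<Longrightarrow> j \<le> m \<Longrightarrow> a i \<le> a j"
    and nonzero: "\<exists>j\<in>{1..m}. a j \<noteq> 0"
    and sum_zero: "(\<Sum>j=1..m. a j) = 0"
begin

abbreviation "Q \<equiv> Qpoly a m"
abbreviation "D \<equiv> in_phase_domain a m"

lemma m_pos: "m \<ge> 1"
  using nonzero by auto

lemma last_weight_pos: "a m > 0"
proof (rule ccontr)
  assume "\<not> a m > 0"
  then have "\<forall>j\<in>{1..m}. - a j \<ge> 0" using sorted by force
  moreover have "(\<Sum>j=1..m. - a j) = 0" using sum_zero by (simp add: sum_negf)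
  ultimately have "\<forall>j\<in>{1..m}. a j = 0" by (subst (asm) sum_nonneg_eq_0_iff) auto
  then show False using nonzero by auto
qed

lemma first_weight_neg: "a 1 < 0"
proof (rule ccontr)
  assume "\<not> a 1 < 0"
  then have "\<forall>j\<in>{1..m}. a j \<ge> 0" using sorted by force
  then have "\<forall>j\<in>{1..m}. a j = 0" using sum_zero by (subst (asm) sum_nonneg_eq_0_iff) auto
  then show False using nonzero by auto
qed

lemma in_phase_domain_iff: "D u \<longleftrightarrow> -1 / of_int (a m) < u \<and> u < -1 / of_int (a 1)"
proof -
  have am: "(of_int (a m) :: real) > 0" and a1: "(of_int (a 1) :: real) < 0"
    using last_weight_pos first_weight_neg by simp_all
  have "D u \<longleftrightarrow> of_int (a m) * u + 1 > 0 \<and> of_int (a 1) * u + 1 > 0"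
  proof
    show "D u \<Longrightarrow> of_int (a m) * u + 1 > 0 \<and> of_int (a 1) * u + 1 > 0"
      using m_pos by (auto simp: in_phase_domain_def)
    assume ends: "of_int (a m) * u + 1 > 0 \<and> of_int (a 1) * u + 1 > 0"
    show "D u" unfolding in_phase_domain_def
    proof
      fix j assume "j \<in> {1..m}"
      then have "of_int (a 1) \<le> (of_int (a j) :: real)" "of_int (a j) \<le> (of_int (a m) :: real)"
        using sorted by auto
      then have "of_int (a j) * u \<ge> min (of_int (a 1) * u) (of_int (a m) * u)"
        by (cases "u \<ge> 0") (auto simp: mult_right_mono mult_right_mono_neg)
      with ends show "of_int (a j) * u + 1 > 0" by linarith
    qed
  qed
  also have "\<dots> \<longleftrightarrow> -1 / of_int (a m) < u \<and> u < -1 / of_int (a 1)"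
    using am a1 by (auto simp: field_simps)
  finally show ?thesis .
qed

lemma Qpoly_left_end: "Q (-1 / of_int (a m)) = 0"
  unfolding Qpoly_def using last_weight_pos m_pos
  by (intro prod_zero) (auto intro!: bexI[of _ m])

lemma Qpoly_right_end: "Q (-1 / of_int (a 1)) = 0"
  unfolding Qpoly_def using first_weight_neg m_pos
  by (intro prod_zero) (auto intro!: bexI[of _ 1])

lemma Ssum_pos: "D u \<Longrightarrow> u < 0 \<Longrightarrow> Ssum a m u > 0"
  using Ssum_eq_neg_mult_Rsum[OF sum_zero] Rsum_pos[OF nonzero] by (simp add: mult_neg_pos)

lemma Ssum_neg: "D u \<Longrightarrow> u > 0 \<Longrightarrow> Ssum a m u < 0"
  using Ssum_eq_neg_mult_Rsum[OF sum_zero] Rsum_pos[OF nonzero] by (simp add: mult_pos_pos)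

lemma Qpoly_strict_mono_neg:
  assumes "D x" "x < y" "y \<le> 0"
  shows "Q x < Q y"
proof (rule DERIV_pos_imp_increasing_open[OF assms(2) _ continuous_on_Qpoly])
  fix z assume z: "x < z" "z < y"
  then have "D z" using in_phase_domain_between[OF assms(1) in_phase_domain_0, of z] assms by auto
  then show "\<exists>l. (Q has_real_derivative l) (at z) \<and> 0 < l"
    using Qpoly_deriv Qpoly_pos Ssum_pos z assms by (intro exI conjI) (auto intro!: mult_pos_pos)
qed

lemma Qpoly_strict_antimono_pos:
  assumes "D y" "x < y" "0 \<le> x"
  shows "Q y < Q x"
proof -
  have "(\<lambda>z. - Q z) x < (\<lambda>z. - Q z) y"
  proof (rule DERIV_pos_imp_increasing_open[OF assms(2)])
    fix z assume z: "x < z" "z < y"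
    then have "D z" using in_phase_domain_between[OF in_phase_domain_0 assms(1), of z] assms by auto
    then show "\<exists>l. ((\<lambda>z. - Q z) has_real_derivative l) (at z) \<and> 0 < l"
      using Qpoly_deriv[THEN DERIV_minus] Qpoly_pos Ssum_neg z assms
      by (intro exI conjI) (auto intro!: mult_pos_neg)
  qed (intro continuous_intros continuous_on_Qpoly)
  then show ?thesis by simp
qed

lemma level_crossing_left:
  assumes "0 < c" "c < 1" "D u0" "c \<le> Q u0"
  obtains u1 where "u1 < 0" "u1 \<le> u0" "D u1" "Q u1 = c"
proof -
  define l where "l = -1 / (of_int (a m) :: real)"
  have "l < 0" using last_weight_pos by (simp add: l_def)
  moreover have "l < u0" using assms(3) by (simp add: in_phase_domain_iff l_def)
  moreover have "c \<le> Q (min u0 0)" using assms by (cases "u0 \<le> 0") (simp_all add: min_def)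
  moreover have "Q l \<le> c" using Qpoly_left_end \<open>0 < c\<close> by (simp add: l_def)
  ultimately obtain u1 where u1: "l \<le> u1" "u1 \<le> min u0 0" "Q u1 = c"
    using IVT'[of Q l c "min u0 0", OF _ _ _ continuous_on_Qpoly] by auto
  have "u1 \<noteq> l" using u1(3) Qpoly_left_end \<open>0 < c\<close> by (auto simp: l_def)
  moreover have "u1 \<noteq> 0" using u1(3) \<open>c < 1\<close> by auto
  ultimately have "l < u1" "u1 < 0"
    using le_neq_trans[OF u1(1)] le_neq_trans[of u1 0] u1(2) by auto
  moreover have "0 < -1 / (of_int (a 1) :: real)" using first_weight_neg by (simp add: divide_neg_neg)
  ultimately have "l < u1" "u1 < 0" "u1 < -1 / of_int (a 1)" by (blast intro: less_trans)+
  then show ?thesis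
    using u1 by (intro that) (simp_all add: in_phase_domain_iff l_def)
qed

lemma level_crossing_right:
  assumes "0 < c" "c < 1" "D u0" "c \<le> Q u0"
  obtains u2 where "0 < u2" "u0 \<le> u2" "D u2" "Q u2 = c"
proof -
  define r where "r = -1 / (of_int (a 1) :: real)"
  have "0 < r" using first_weight_neg by (simp add: r_def divide_neg_neg)
  moreover have "u0 < r" using assms(3) by (simp add: in_phase_domain_iff r_def)
  moreover have "c \<le> Q (max u0 0)" using assms by (cases "u0 \<ge> 0") (simp_all add: max_def)
  moreover have "Q r \<le> c" using Qpoly_right_end \<open>0 < c\<close> by (simp add: r_def)
  ultimately obtain u2 where u2: "max u0 0 \<le> u2" "u2 \<le> r" "Q u2 = c"
    using IVT2'[of Q r c "max u0 0", OF _ _ _ continuous_on_Qpoly] by auto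
  have "u2 \<noteq> r" using u2(3) Qpoly_right_end \<open>0 < c\<close> by (auto simp: r_def)
  moreover have "u2 \<noteq> 0" using u2(3) \<open>c < 1\<close> by auto
  ultimately have "u2 < r" "0 < u2"
    using le_neq_trans[OF u2(2)] le_neq_trans[of 0 u2] u2(1) by auto
  moreover have "-1 / (of_int (a m) :: real) < 0" using last_weight_pos by simp
  ultimately have "u2 < r" "0 < u2" "-1 / of_int (a m) < u2" by (blast intro: less_trans)+
  then show ?thesis
    using u2 by (intro that) (simp_all add: in_phase_domain_iff r_def)
qed

lemma level_factor_pos:
  assumes factor: "\<And>x. Q x = c + (x - u1) * (u2 - x) * poly w x"
    and "u1 < 0" "0 < u2" "D u1" "D u2" "u1 \<le> x" "x \<le> u2"
  shows "poly w x > 0"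
proof -
  \<comment> \<open>At the roots, the sign of w is read off from Q' = Q * Ssum, which is positive
    left of 0 and negative right of 0.\<close>
  consider "x = u1" | "x = u2" | "u1 < x \<and> x < u2" using assms(6,7) by linarith
  then show ?thesis
  proof cases
    case 1
    have "Q u1 * Ssum a m u1 = (u2 - u1) * poly w u1"
      unfolding Qpoly_deriv_factored[OF factor \<open>D u1\<close>] by (simp add: algebra_simps)
    then have "0 < (u2 - u1) * poly w u1"
      using Qpoly_pos[OF \<open>D u1\<close>] Ssum_pos[OF \<open>D u1\<close> \<open>u1 < 0\<close>] by (metis mult_pos_pos)
    then show ?thesis using 1 assms(2,3) by (simp add: zero_less_mult_iff)
  next
    case 2
    have "Q u2 * Ssum a m u2 = (u1 - u2) * poly w u2"
      unfolding Qpoly_deriv_factored[OF factor \<open>D u2\<close>] by (simp add: algebra_simps)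
    then have "(u1 - u2) * poly w u2 < 0"
      using Qpoly_pos[OF \<open>D u2\<close>] Ssum_neg[OF \<open>D u2\<close> \<open>0 < u2\<close>] by (metis mult_pos_neg)
    then show ?thesis using 2 assms(2,3) by (simp add: mult_less_0_iff)
  next
    case 3
    have "Q u1 = c" "Q u2 = c" using factor[of u1] factor[of u2] by simp_all
    then have "c < Q x"
      using Qpoly_strict_mono_neg[OF \<open>D u1\<close>, of x] Qpoly_strict_antimono_pos[OF \<open>D u2\<close>, of x] 3
      by (cases "x \<le> 0") auto
    then have "(x - u1) * (u2 - x) * poly w x > 0" using factor[of x] by simp
    moreover have "(x - u1) * (u2 - x) > 0" using 3 by simp
    ultimately show ?thesis by (simp add: zero_less_mult_iff)
  qed
qed

lemma level_set_factorization:
  assumes "0 < c" "c < 1" "D u0" "c \<le> Q u0"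
  obtains u1 u2 w where "u1 < 0" "0 < u2" "u1 \<le> u0" "u0 \<le> u2"
    "\<And>x. Q x = c + (x - u1) * (u2 - x) * poly w x"
    "\<And>x. u1 \<le> x \<Longrightarrow> x \<le> u2 \<Longrightarrow> poly w x > 0"
    "\<And>x. u1 \<le> x \<Longrightarrow> x \<le> u2 \<Longrightarrow> D x"
proof -
  obtain u1 where u1: "u1 < 0" "u1 \<le> u0" "D u1" "Q u1 = c"
    using level_crossing_left[OF assms] .
  obtain u2 where u2: "0 < u2" "u0 \<le> u2" "D u2" "Q u2 = c"
    using level_crossing_right[OF assms] .
  obtain w where factor: "\<And>x. Q x = c + (x - u1) * (u2 - x) * poly w x"
  proof (rule poly_two_roots_factor[of "(\<Prod>j=1..m. [:1, of_int (a j):]) - [:c:]" u1 u2])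
    fix w assume "\<And>x. poly ((\<Prod>j=1..m. [:1, of_int (a j):]) - [:c:]) x = (x - u1) * (u2 - x) * poly w x"
    then show thesis by (intro that[of w]) (simp add: Qpoly_eq_poly algebra_simps)
  qed (use u1 u2 in \<open>simp_all add: Qpoly_eq_poly\<close>)
  show ?thesis
  proof (rule that[OF u1(1) u2(1) u1(2) u2(2) factor])
    show "poly w x > 0" if "u1 \<le> x" "x \<le> u2" for x
      by (rule level_factor_pos[OF factor u1(1) u2(1) u1(3) u2(3) that])
    show "D x" if "u1 \<le> x" "x \<le> u2" for x
      by (rule in_phase_domain_between[OF u1(3) u2(3) that])
  qed
qed

end

section \<open>The periodic orbit\<close>

lemma cos_interpolation_bounds:
  fixes u1 u2 x :: real
  assumes "u1 \<le> u2"
  shows "u1 \<le> (u1 + u2) / 2 + (u2 - u1) / 2 * cos x" and "(u1 + u2) / 2 + (u2 - u1) / 2 * cos x \<le> u2"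
proof -
  define k where "k = (u2 - u1) / 2 * cos x"
  have bound: "\<bar>k\<bar> \<le> (u2 - u1) / 2"
    using assms by (simp add: k_def abs_mult mult_left_le)
  show "u1 \<le> (u1 + u2) / 2 + (u2 - u1) / 2 * cos x"
    using abs_le_D2[OF bound] unfolding k_def[symmetric] by (simp add: field_simps)
  show "(u1 + u2) / 2 + (u2 - u1) / 2 * cos x \<le> u2"
    using abs_le_D1[OF bound] unfolding k_def[symmetric] by (simp add: field_simps)
qed

lemma initial_phase_exists:
  fixes u1 u2 u0 X0 g0 :: real
  assumes "u1 < u2" "g0 > 0" "X0\<^sup>2 = (u0 - u1) * (u2 - u0) * g0"
  obtains \<phi>0 where "(u1 + u2) / 2 + (u2 - u1) / 2 * cos \<phi>0 = u0"
    "- ((u2 - u1) / 2) * sin \<phi>0 * sqrt g0 = X0"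
proof -
  define c r where "c = (u1 + u2) / 2" and "r = (u2 - u1) / 2"
  have "r > 0" using assms(1) by (simp add: r_def)
  have "X0\<^sup>2 = (r\<^sup>2 - (u0 - c)\<^sup>2) * g0"
    unfolding assms(3) by (simp add: c_def r_def power2_eq_square field_simps)
  then have "((u0 - c) / r)\<^sup>2 + (- X0 / (r * sqrt g0))\<^sup>2 = 1"
    using \<open>r > 0\<close> assms(2) by (simp add: power_mult_distrib power_divide field_simps)
  then obtain \<phi>0 where "(u0 - c) / r = cos \<phi>0" "- X0 / (r * sqrt g0) = sin \<phi>0"
    by (rule sincos_total_2pi)
  with \<open>r > 0\<close> assms(2) have "c + r * cos \<phi>0 = u0" "- r * sin \<phi>0 * sqrt g0 = X0"
    by (simp_all add: field_simps)
  then show ?thesis unfolding c_def r_def by (rule that)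
qed

lemma arctan_polar:
  fixes A X :: real
  assumes "A > 0"
  shows "sqrt (A\<^sup>2 + X\<^sup>2) * sin (pi / 2 - arctan (X / A)) = A"
    and "sqrt (A\<^sup>2 + X\<^sup>2) * cos (pi / 2 - arctan (X / A)) = X"
proof -
  have "A\<^sup>2 + X\<^sup>2 = A\<^sup>2 * (1 + (X / A)\<^sup>2)" using assms by (simp add: field_simps)
  then have s: "sqrt (A\<^sup>2 + X\<^sup>2) = A * sqrt (1 + (X / A)\<^sup>2)"
    using assms by (simp add: real_sqrt_mult)
  have "0 < 1 + (X / A)\<^sup>2" by (intro add_pos_nonneg) simp_all
  then have "sqrt (1 + (X / A)\<^sup>2) \<noteq> 0" by simp
  then show "sqrt (A\<^sup>2 + X\<^sup>2) * sin (pi / 2 - arctan (X / A)) = A"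
    and "sqrt (A\<^sup>2 + X\<^sup>2) * cos (pi / 2 - arctan (X / A)) = X"
    using assms unfolding s sin_diff cos_diff by (simp_all add: cos_arctan sin_arctan)
qed

text \<open>The orbit oscillates as u = centre + radius * cos phi between the two roots u1, u2 of
  Q = A^2, and X plays the role of sqrt (Q u) * cos theta.\<close>

locale periodic_orbit =
  fixes a :: "nat \<Rightarrow> int" and m :: nat and A u1 u2 :: real and w :: "real poly"
    and \<phi> :: "real \<Rightarrow> real" and T :: real
  assumes A_pos: "A > 0"
    and u1_less_u2: "u1 < u2"
    and Qpoly_factor: "\<And>x. Qpoly a m x = A\<^sup>2 + (x - u1) * (u2 - x) * poly w x"
    and w_pos: "\<And>x. u1 \<le> x \<Longrightarrow> x \<le> u2 \<Longrightarrow> poly w x > 0"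
    and domain: "\<And>x. u1 \<le> x \<Longrightarrow> x \<le> u2 \<Longrightarrow> in_phase_domain a m x"
    and phase_deriv: "\<And>t. (\<phi> has_real_derivative
          2 * sqrt (poly w ((u1 + u2) / 2 + (u2 - u1) / 2 * cos (\<phi> t)))) (at t)"
    and period_pos: "T > 0"
    and phase_shift: "\<And>t. \<phi> (t + T) = \<phi> t + 2 * pi"
    and phase_surj: "surj \<phi>"
begin

definition centre :: real where "centre = (u1 + u2) / 2"

definition radius :: real where "radius = (u2 - u1) / 2"

lemma radius_pos: "radius > 0"
  using u1_less_u2 by (simp add: radius_def)

definition orbit_u :: "real \<Rightarrow> real" where
  "orbit_u t = centre + radius * cos (\<phi> t)"

definition orbit_X :: "real \<Rightarrow> real" where
  "orbit_X t = - radius * sin (\<phi> t) * sqrt (poly w (orbit_u t))"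

lemma orbit_u_bounds: "u1 \<le> orbit_u t" "orbit_u t \<le> u2"
  using cos_interpolation_bounds[OF less_imp_le[OF u1_less_u2]]
  by (simp_all add: orbit_u_def centre_def radius_def)

lemma orbit_u_domain: "in_phase_domain a m (orbit_u t)"
  using domain[OF orbit_u_bounds] .

lemma w_orbit_pos: "poly w (orbit_u t) > 0"
  using w_pos[OF orbit_u_bounds] .

lemma orbit_phase_deriv: "(\<phi> has_real_derivative 2 * sqrt (poly w (orbit_u t))) (at t)"
  using phase_deriv[of t] by (simp add: orbit_u_def centre_def radius_def)

lemma orbit_u_deriv: "(orbit_u has_real_derivative 2 * orbit_X t) (at t)"
  unfolding orbit_u_def[abs_def] orbit_X_def
  by (auto intro!: derivative_eq_intros orbit_phase_deriv simp: orbit_u_def)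

lemma orbit_gap: "(orbit_u t - u1) * (u2 - orbit_u t) = radius\<^sup>2 * (sin (\<phi> t))\<^sup>2"
proof -
  have e: "orbit_u t - u1 = radius * (1 + cos (\<phi> t))" "u2 - orbit_u t = radius * (1 - cos (\<phi> t))"
    by (simp_all add: orbit_u_def centre_def radius_def field_simps)
  have "(orbit_u t - u1) * (u2 - orbit_u t) = radius\<^sup>2 * (1 - (cos (\<phi> t))\<^sup>2)"
    unfolding e by (simp add: power2_eq_square algebra_simps)
  then show ?thesis by (simp add: sin_squared_eq)
qed

lemma orbit_Qpoly: "Qpoly a m (orbit_u t) = A\<^sup>2 + (orbit_X t)\<^sup>2"
  using Qpoly_factor[of "orbit_u t"] orbit_gap[of t] less_imp_le[OF w_orbit_pos[of t]]
  by (simp add: orbit_X_def power_mult_distrib)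

lemma sqrt_w_orbit_deriv:
  "((\<lambda>t. sqrt (poly w (orbit_u t))) has_real_derivative
     - radius * sin (\<phi> t) * poly (pderiv w) (orbit_u t)) (at t)"
proof -
  have "((\<lambda>t. poly w (orbit_u t)) has_real_derivative poly (pderiv w) (orbit_u t) * (2 * orbit_X t)) (at t)"
    by (rule DERIV_chain2[OF poly_DERIV orbit_u_deriv])
  from DERIV_chain2[OF DERIV_real_sqrt[OF w_orbit_pos[of t]] this]
  have "((\<lambda>t. sqrt (poly w (orbit_u t))) has_real_derivative
      inverse (sqrt (poly w (orbit_u t))) / 2 * (poly (pderiv w) (orbit_u t) * (2 * orbit_X t))) (at t)" .
  moreover have "sqrt (poly w (orbit_u t)) \<noteq> 0" using w_orbit_pos[of t] by simp
  ultimately show ?thesis by (simp add: orbit_X_def field_simps)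
qed

lemma orbit_X_deriv: "(orbit_X has_real_derivative Qpoly a m (orbit_u t) * Ssum a m (orbit_u t)) (at t)"
proof -
  define s where "s = sqrt (poly w (orbit_u t))"
  have s_sq: "s * s = poly w (orbit_u t)" using w_orbit_pos[of t] by (simp add: s_def)
  have "((\<lambda>t. - radius * sin (\<phi> t)) has_real_derivative - radius * (cos (\<phi> t) * (2 * s))) (at t)"
    unfolding s_def by (rule DERIV_cmult[OF DERIV_chain2[OF DERIV_sin orbit_phase_deriv]])
  from DERIV_mult[OF this sqrt_w_orbit_deriv]
  have "(orbit_X has_real_derivative - radius * (cos (\<phi> t) * (2 * s)) * s +
      - radius * sin (\<phi> t) * poly (pderiv w) (orbit_u t) * (- radius * sin (\<phi> t))) (at t)"
    unfolding orbit_X_def[abs_def] s_def .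
  moreover have "- radius * (cos (\<phi> t) * (2 * s)) * s +
      - radius * sin (\<phi> t) * poly (pderiv w) (orbit_u t) * (- radius * sin (\<phi> t))
      = (u1 + u2 - 2 * orbit_u t) * poly w (orbit_u t) +
        (orbit_u t - u1) * (u2 - orbit_u t) * poly (pderiv w) (orbit_u t)"
  proof -
    have e: "u1 + u2 - 2 * orbit_u t = - 2 * radius * cos (\<phi> t)"
      by (simp add: orbit_u_def centre_def radius_def field_simps)
    show ?thesis
      unfolding e orbit_gap s_sq[symmetric] by (simp add: power2_eq_square algebra_simps)
  qed
  ultimately show ?thesis
    by (simp add: Qpoly_deriv_factored[OF Qpoly_factor orbit_u_domain])
qed

lemma orbit_periodic: "orbit_u (t + T) = orbit_u t" "orbit_X (t + T) = orbit_X t"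
  by (simp_all add: orbit_u_def orbit_X_def phase_shift)

lemma orbit_u_nonconst: "\<not> (\<exists>c. \<forall>t. orbit_u t = c)"
proof
  assume "\<exists>c. \<forall>t. orbit_u t = c"
  then obtain c where c: "\<And>t. orbit_u t = c" by blast
  obtain t0 t1 where t0: "\<phi> t0 = 0" and t1: "\<phi> t1 = pi" using phase_surj by (metis surjD)
  have "orbit_u t0 = orbit_u t1" by (simp add: c)
  then show False using radius_pos by (simp add: orbit_u_def t0 t1)
qed

lemma orbit_X_changes_sign: "\<exists>t. orbit_X t < 0" "\<exists>t. orbit_X t > 0"
proof -
  obtain t0 t1 where t0: "\<phi> t0 = pi / 2" and t1: "\<phi> t1 = - (pi / 2)"
    using phase_surj by (metis surjD)
  have "orbit_X t0 < 0" "orbit_X t1 > 0"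
    using radius_pos w_orbit_pos by (simp_all add: orbit_X_def t0 t1)
  then show "\<exists>t. orbit_X t < 0" "\<exists>t. orbit_X t > 0" by blast+
qed

text \<open>pi/2 - arctan (X/A) is a polar angle of the point (X, A).\<close>

definition orbit_angle :: "real \<Rightarrow> real \<Rightarrow> real" where
  "orbit_angle \<theta>0 t = \<theta>0 + arctan (orbit_X 0 / A) - arctan (orbit_X t / A)"

lemma orbit_angle_polar:
  assumes s0: "sqrt (Qpoly a m (orbit_u 0)) * sin \<theta>0 = A"
    and c0: "sqrt (Qpoly a m (orbit_u 0)) * cos \<theta>0 = orbit_X 0"
  shows "sqrt (Qpoly a m (orbit_u t)) * sin (orbit_angle \<theta>0 t) = A"
    and "sqrt (Qpoly a m (orbit_u t)) * cos (orbit_angle \<theta>0 t) = orbit_X t"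
proof -
  define \<gamma> where "\<gamma> x = pi / 2 - arctan (x / A)" for x
  have polar: "sqrt (Qpoly a m (orbit_u s)) * sin (\<gamma> (orbit_X s)) = A"
    "sqrt (Qpoly a m (orbit_u s)) * cos (\<gamma> (orbit_X s)) = orbit_X s" for s
    using arctan_polar[OF A_pos] by (simp_all add: \<gamma>_def orbit_Qpoly)
  have "sqrt (Qpoly a m (orbit_u 0)) \<noteq> 0" using Qpoly_pos[OF orbit_u_domain[of 0]] by simp
  then have sin0: "sin \<theta>0 = sin (\<gamma> (orbit_X 0))" and cos0: "cos \<theta>0 = cos (\<gamma> (orbit_X 0))"
    using s0 c0 polar[of 0] by (metis mult_cancel_left)+
  define \<delta> where "\<delta> = \<theta>0 - \<gamma> (orbit_X 0)"
  have "sin \<delta> = 0" "cos \<delta> = 1"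
    by (simp_all add: \<delta>_def sin_diff cos_diff sin0 cos0 sin_cos_squared_add3 mult.commute)
  moreover have "orbit_angle \<theta>0 t = \<delta> + \<gamma> (orbit_X t)"
    by (simp add: orbit_angle_def \<delta>_def \<gamma>_def)
  ultimately show "sqrt (Qpoly a m (orbit_u t)) * sin (orbit_angle \<theta>0 t) = A"
    and "sqrt (Qpoly a m (orbit_u t)) * cos (orbit_angle \<theta>0 t) = orbit_X t"
    by (simp_all add: sin_add cos_add polar)
qed

lemma orbit_angle_deriv: "(orbit_angle \<theta>0 has_real_derivative - A * Ssum a m (orbit_u t)) (at t)"
proof -
  have "((\<lambda>t. arctan (orbit_X t / A)) has_real_derivative
      inverse (1 + (orbit_X t / A)\<^sup>2) * (Qpoly a m (orbit_u t) * Ssum a m (orbit_u t) / A)) (at t)"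
    by (rule DERIV_chain2[OF DERIV_arctan DERIV_cdivide[OF orbit_X_deriv]])
  from DERIV_diff[OF DERIV_const this]
  have "(orbit_angle \<theta>0 has_real_derivative
      0 - inverse (1 + (orbit_X t / A)\<^sup>2) * (Qpoly a m (orbit_u t) * Ssum a m (orbit_u t) / A)) (at t)"
    unfolding orbit_angle_def[abs_def] .
  moreover have "1 + (orbit_X t / A)\<^sup>2 = Qpoly a m (orbit_u t) / A\<^sup>2"
    using A_pos by (simp add: orbit_Qpoly field_simps)
  moreover have "Qpoly a m (orbit_u t) > 0" by (rule Qpoly_pos[OF orbit_u_domain])
  ultimately show ?thesis using A_pos by (simp add: field_simps power2_eq_square)
qed

lemma orbit_angle_periodic: "orbit_angle \<theta>0 (t + T) = orbit_angle \<theta>0 t"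
  by (simp add: orbit_angle_def orbit_periodic)

lemma orbit_angle_nonconst: "\<not> (\<exists>c. \<forall>t. orbit_angle \<theta>0 t = c)"
proof
  assume "\<exists>c. \<forall>t. orbit_angle \<theta>0 t = c"
  then obtain c where c: "\<And>t. orbit_angle \<theta>0 t = c" by blast
  obtain t0 t1 where "orbit_X t0 < 0" "orbit_X t1 > 0" using orbit_X_changes_sign by blast
  then have "arctan (orbit_X t0 / A) < arctan (orbit_X t1 / A)"
    using A_pos by (simp add: arctan_less_iff divide_strict_right_mono)
  moreover have "orbit_angle \<theta>0 t0 = orbit_angle \<theta>0 t1" by (simp add: c)
  ultimately show False by (simp add: orbit_angle_def)
qed

lemma orbit_drift:
  assumes "\<exists>j\<in>{1..m}. a j \<noteq> 0"
  obtains \<psi> \<Psi> where "\<psi> 0 = \<psi>0" "\<And>t. (\<psi> has_real_derivative - A * Rsum a m (orbit_u t)) (at t)"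
    "\<Psi> > 0" "\<And>t. \<psi> (t + T) = \<psi> t - \<Psi>"
proof -
  have "continuous_on UNIV orbit_u"
    using orbit_u_deriv by (blast intro: continuous_at_imp_continuous_on DERIV_isCont)
  then have "continuous_on UNIV (\<lambda>t. - A * Rsum a m (orbit_u t))"
    using orbit_u_bounds domain
    by (intro continuous_intros continuous_on_compose2[OF continuous_on_Rsum[of "{u1..u2}"]]) auto
  then obtain G where G0: "G 0 = 0" and dG: "\<And>t. (G has_real_derivative - A * Rsum a m (orbit_u t)) (at t)"
    using continuous_has_antiderivative[of _ 0] by blast
  have shift: "G (t + T) = G t + (G T - G 0)" for t
    by (rule shift_difference_const[OF dG]) (simp add: orbit_periodic)
  have "G T < G 0"
  proof (rule DERIV_neg_imp_decreasing[OF period_pos])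
    fix t show "\<exists>y. (G has_real_derivative y) (at t) \<and> y < 0"
      using A_pos Rsum_pos[OF assms orbit_u_domain[of t]]
      by (intro exI[of _ "- A * Rsum a m (orbit_u t)"] conjI dG) simp
  qed
  then show ?thesis
    by (intro that[of "\<lambda>t. \<psi>0 + G t" "- G T"]) (auto intro!: derivative_eq_intros dG simp: G0 shift)
qed

lemma orbit_is_solution:
  assumes s0: "sqrt (Qpoly a m (orbit_u 0)) * sin \<theta>0 = A"
    and c0: "sqrt (Qpoly a m (orbit_u 0)) * cos \<theta>0 = orbit_X 0"
    and d\<psi>: "\<And>t. (\<psi> has_real_derivative - A * Rsum a m (orbit_u t)) (at t)"
  shows "is_solution a m orbit_u (orbit_angle \<theta>0) \<psi>"
proof (rule is_solutionI)
  note polar = orbit_angle_polar[OF s0 c0]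
  fix t
  show "in_phase_domain a m (orbit_u t)" by (rule orbit_u_domain)
  show "(orbit_u has_real_derivative 2 * sqrt (Qpoly a m (orbit_u t)) * cos (orbit_angle \<theta>0 t)) (at t)"
    using orbit_u_deriv[of t] by (simp add: mult.assoc polar(2))
  show "(orbit_angle \<theta>0 has_real_derivative
      - sqrt (Qpoly a m (orbit_u t)) * sin (orbit_angle \<theta>0 t) * Ssum a m (orbit_u t)) (at t)"
    using orbit_angle_deriv[of \<theta>0 t] by (simp add: polar(1))
  show "(\<psi> has_real_derivative
      - sqrt (Qpoly a m (orbit_u t)) * sin (orbit_angle \<theta>0 t) * Rsum a m (orbit_u t)) (at t)"
    using d\<psi>[of t] by (simp add: polar(1))
qed

end

context zero_sum_weights
begin

lemma orbit_through_initial_point: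
  assumes "D u0" and "0 < sqrt (Q u0) * sin \<theta>0" and "sqrt (Q u0) * sin \<theta>0 < 1"
  obtains u1 u2 w \<phi> T where "periodic_orbit a m (sqrt (Q u0) * sin \<theta>0) u1 u2 w \<phi> T"
    "(u1 + u2) / 2 + (u2 - u1) / 2 * cos (\<phi> 0) = u0"
    "- ((u2 - u1) / 2) * sin (\<phi> 0) * sqrt (poly w u0) = sqrt (Q u0) * cos \<theta>0"
proof -
  define A where "A = sqrt (Q u0) * sin \<theta>0"
  have Q0: "Q u0 > 0" by (rule Qpoly_pos[OF \<open>D u0\<close>])
  have A_sq: "A\<^sup>2 = Q u0 * (sin \<theta>0)\<^sup>2" using Q0 by (simp add: A_def power_mult_distrib)
  have "A\<^sup>2 \<le> Q u0" using Q0 by (simp add: A_sq abs_square_le_1 mult_left_le)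
  moreover have "0 < A" "A < 1" using assms(2,3) by (simp_all add: A_def)
  then have "0 < A\<^sup>2" "A\<^sup>2 < 1" by (auto simp: power_less_one_iff)
  ultimately obtain u1 u2 w where "u1 < 0" "0 < u2" "u1 \<le> u0" "u0 \<le> u2"
    and factor: "\<And>x. Q x = A\<^sup>2 + (x - u1) * (u2 - x) * poly w x"
    and w_pos: "\<And>x. u1 \<le> x \<Longrightarrow> x \<le> u2 \<Longrightarrow> poly w x > 0"
    and dom: "\<And>x. u1 \<le> x \<Longrightarrow> x \<le> u2 \<Longrightarrow> D x"
    using level_set_factorization[OF _ _ \<open>D u0\<close>] by metis
  have w0: "poly w u0 > 0" using w_pos \<open>u1 \<le> u0\<close> \<open>u0 \<le> u2\<close> by blast
  have "(sqrt (Q u0) * cos \<theta>0)\<^sup>2 = Q u0 - A\<^sup>2"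
    using Q0 by (simp add: A_sq power_mult_distrib cos_squared_eq algebra_simps)
  also have "\<dots> = (u0 - u1) * (u2 - u0) * poly w u0" by (simp add: factor)
  finally obtain \<phi>0 where init: "(u1 + u2) / 2 + (u2 - u1) / 2 * cos \<phi>0 = u0"
    "- ((u2 - u1) / 2) * sin \<phi>0 * sqrt (poly w u0) = sqrt (Q u0) * cos \<theta>0"
    using initial_phase_exists[of u1 u2 "poly w u0"] \<open>u1 < 0\<close> \<open>0 < u2\<close> w0 by force
  define h where "h x = 2 * sqrt (poly w ((u1 + u2) / 2 + (u2 - u1) / 2 * cos x))" for x
  have h_cont: "continuous_on UNIV h" unfolding h_def by (intro continuous_intros)
  have h_pos: "h x > 0" for x
    using w_pos cos_interpolation_bounds[of u1 u2 x] \<open>u1 < 0\<close> \<open>0 < u2\<close> by (simp add: h_def)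
  have h_periodic: "h (x + 2 * pi) = h x" for x by (simp add: h_def)
  obtain \<phi> T where \<phi>: "T > 0" "\<phi> 0 = \<phi>0" "\<And>t. (\<phi> has_real_derivative h (\<phi> t)) (at t)"
      "\<And>t. \<phi> (t + T) = \<phi> t + 2 * pi" "surj \<phi>"
    by (rule periodic_phase_flow[of h "2 * pi" \<phi>0, OF h_cont h_pos h_periodic]) (simp, blast)
  have "periodic_orbit a m A u1 u2 w \<phi> T"
  proof unfold_locales
    show "0 < A" by fact
    show "u1 < u2" using \<open>u1 < 0\<close> \<open>0 < u2\<close> by simp
    show "Q x = A\<^sup>2 + (x - u1) * (u2 - x) * poly w x" for x by (rule factor)
    show "u1 \<le> x \<Longrightarrow> x \<le> u2 \<Longrightarrow> poly w x > 0" for x by (rule w_pos)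
    show "u1 \<le> x \<Longrightarrow> x \<le> u2 \<Longrightarrow> D x" for x by (rule dom)
    show "(\<phi> has_real_derivative 2 * sqrt (poly w ((u1 + u2) / 2 + (u2 - u1) / 2 * cos (\<phi> t)))) (at t)"
      for t using \<phi>(3)[of t] by (simp add: h_def)
  qed (fact \<phi>)+
  then show ?thesis using init[folded \<phi>(2)] unfolding A_def by (rule that)
qed

lemma periodic_solution_exists:
  assumes "D u0" and "0 < sqrt (Q u0) * sin \<theta>0" and "sqrt (Q u0) * sin \<theta>0 < 1"
  obtains u \<theta> \<psi> T \<Psi> where "is_solution a m u \<theta> \<psi>" "u 0 = u0" "\<theta> 0 = \<theta>0" "\<psi> 0 = \<psi>0"
    "\<not> (\<exists>c. \<forall>t. u t = c)" "\<not> (\<exists>c. \<forall>t. \<theta> t = c)"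
    "T > 0" "\<And>t. u (t + T) = u t" "\<And>t. \<theta> (t + T) = \<theta> t"
    "\<Psi> > 0" "\<And>t. \<psi> (t + T) = \<psi> t - \<Psi>"
proof -
  obtain u1 u2 w \<phi> T where orbit: "periodic_orbit a m (sqrt (Q u0) * sin \<theta>0) u1 u2 w \<phi> T"
    and init_u: "(u1 + u2) / 2 + (u2 - u1) / 2 * cos (\<phi> 0) = u0"
    and init_X: "- ((u2 - u1) / 2) * sin (\<phi> 0) * sqrt (poly w u0) = sqrt (Q u0) * cos \<theta>0"
    using orbit_through_initial_point[OF assms] by blast
  interpret periodic_orbit a m "sqrt (Q u0) * sin \<theta>0" u1 u2 w \<phi> T by (rule orbit)
  have u0: "orbit_u 0 = u0" using init_u by (simp add: orbit_u_def centre_def radius_def)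
  have X0: "orbit_X 0 = sqrt (Q u0) * cos \<theta>0" using init_X by (simp add: orbit_X_def radius_def u0)
  obtain \<psi> \<Psi> where \<psi>: "\<psi> 0 = \<psi>0"
      "\<And>t. (\<psi> has_real_derivative - (sqrt (Q u0) * sin \<theta>0) * Rsum a m (orbit_u t)) (at t)"
      "\<Psi> > 0" "\<And>t. \<psi> (t + T) = \<psi> t - \<Psi>"
    by (rule orbit_drift[OF nonzero, of \<psi>0]) blast
  have "is_solution a m orbit_u (orbit_angle \<theta>0) \<psi>"
  proof (rule orbit_is_solution)
    show "sqrt (Q (orbit_u 0)) * sin \<theta>0 = sqrt (Q u0) * sin \<theta>0"
      and "sqrt (Q (orbit_u 0)) * cos \<theta>0 = orbit_X 0" by (simp_all add: u0 X0)
  qed (fact \<psi>(2))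
  then show ?thesis
  proof (rule that[of _ _ _ T \<Psi>])
    show "orbit_angle \<theta>0 0 = \<theta>0" by (simp add: orbit_angle_def)
  qed (simp_all add: u0 orbit_u_nonconst orbit_angle_nonconst period_pos orbit_periodic
      orbit_angle_periodic \<psi>)
qed

end

theorem proposition7p11:
  fixes a :: "nat \<Rightarrow> int" and m :: nat and u0 \<theta>0 \<psi>0 :: real
  assumes m3: "m \<ge> 3"
    and sorted: "\<And>i j. 1 \<le> i \<Longrightarrow> i \<le> j \<Longrightarrow> j \<le> m \<Longrightarrow> a i \<le> a j"
    and nonzero: "\<exists>j\<in>{1..m}. a j \<noteq> 0"
    and hcf: "Gcd (a ` {1..m}) = 1"
    and sum0: "(\<Sum>j=1..m. a j) = 0"
    and dom0: "\<And>j. j \<in> {1..m} \<Longrightarrow> of_int (a j) * u0 + 1 > 0"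
    and A_pos: "sqrt (Qpoly a m u0) * sin \<theta>0 > 0"
    and A_lt1: "sqrt (Qpoly a m u0) * sin \<theta>0 < 1"
  shows "\<exists>u \<theta> \<psi>.
           is_solution a m u \<theta> \<psi> \<and> u 0 = u0 \<and> \<theta> 0 = \<theta>0 \<and> \<psi> 0 = \<psi>0 \<and>
           (\<forall>u' \<theta>' \<psi>'. is_solution a m u' \<theta>' \<psi>' \<and> u' 0 = u0 \<and> \<theta>' 0 = \<theta>0 \<and> \<psi>' 0 = \<psi>0
               \<longrightarrow> u' = u \<and> \<theta>' = \<theta> \<and> \<psi>' = \<psi>) \<and>
           (\<not> (\<exists>c. \<forall>t. u t = c)) \<and> (\<not> (\<exists>c. \<forall>t. \<theta> t = c)) \<and>
           (\<exists>T>0. (\<forall>t. u (t + T) = u t) \<and> (\<forall>t. \<theta> (t + T) = \<theta> t) \<and>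
              (\<exists>\<Psi>>0. \<forall>t. \<psi> (t + T) = \<psi> t - \<Psi>))"
proof -
  interpret zero_sum_weights a m
    by (rule zero_sum_weights.intro) (fact sorted nonzero sum0)+
  have "in_phase_domain a m u0" using dom0 by (simp add: in_phase_domain_def)
  then obtain u \<theta> \<psi> T \<Psi> where sol: "is_solution a m u \<theta> \<psi>"
    and init: "u 0 = u0" "\<theta> 0 = \<theta>0" "\<psi> 0 = \<psi>0"
    and nonconst: "\<not> (\<exists>c. \<forall>t. u t = c)" "\<not> (\<exists>c. \<forall>t. \<theta> t = c)"
    and periodic: "T > 0" "\<And>t. u (t + T) = u t" "\<And>t. \<theta> (t + T) = \<theta> t"
    and drift: "\<Psi> > 0" "\<And>t. \<psi> (t + T) = \<psi> t - \<Psi>"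
    by (rule periodic_solution_exists[OF _ A_pos A_lt1, of \<psi>0]) blast
  have "u' = u \<and> \<theta>' = \<theta> \<and> \<psi>' = \<psi>"
    if "is_solution a m u' \<theta>' \<psi>'" "u' 0 = u0" "\<theta>' 0 = \<theta>0" "\<psi>' 0 = \<psi>0" for u' \<theta>' \<psi>'
    using solution_unique[OF sol that(1)] that(2-4) init by simp
  with sol init nonconst periodic drift show ?thesis by blast
qed

end
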